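(* Let $T$ be a compact topological space. Let $\mu,\mu'$ be strictly positive measures on the Borel $\sigma$-algebra of $T$ with $\mu$ absolutely continuous with respect to $\mu'$, and let $d,d'$ be metrics on $T$, both inducing the topology of $T$, so that $X=(T,d,\mu)$ and $X'=(T,d',\mu')$ are metric measure spaces, with distance kernel operators $D$ and $D'$. If $\Phi^X=\Phi^{X'}$ (i.e. the two distance kernel embeddings $T\to\mathbb{C}^\infty$ coincide, so that $D$ and $D'$ have the same scaled eigenfunctions $\alpha_i$), then $d=d'$.
   Context: A measure is strictly positive if every nonempty open set has positive measure. For a compact metric measure space $(T,d,\mu)$ (Radon measure) the distance kernel operator is $(Df)(x)=\int_T f(y)d(x,y)\,d\mu(y)$ on $L^2(T,\mu)$, with orthonormal real eigenfunctions $\phi_i$ and eigenvalues $\lambda_i$ ordered by decreasing absolute value (non-zero eigenvalues of multiplicity one, signs fixed by a convention). $\alpha_i=\sqrt{\lambda_i}\phi_i$ (square root with positive imaginary part if $\lambda_i<0$; zero-eigenvalue eigenfunctions replaced by $0$), and $\Phi^X(x)=(\alpha_1(x),\alpha_2(x),\dots)$. *)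

theory Defs
  imports "HOL-Analysis.Analysis"
begin

definition metric_inducing_topology :: "('a::topological_space \<Rightarrow> 'a \<Rightarrow> real) \<Rightarrow> bool" where
  "metric_inducing_topology d \<longleftrightarrow>
     Metric_space UNIV d \<and> Metric_space.mtopology UNIV d = euclidean"

definition strictly_positive :: "'a::topological_space measure \<Rightarrow> bool" where
  "strictly_positive \<mu> \<longleftrightarrow> (\<forall>U. open U \<and> U \<noteq> {} \<longrightarrow> emeasure \<mu> U > 0)"

definition dist_kernel_op ::
  "'a measure \<Rightarrow> ('a \<Rightarrow> 'a \<Rightarrow> real) \<Rightarrow> ('a \<Rightarrow> real) \<Rightarrow> 'a \<Rightarrow> real" where
  "dist_kernel_op \<mu> d f x = (\<integral>y. f y * d x y \<partial>\<mu>)"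

definition square_integrable :: "'a measure \<Rightarrow> ('a \<Rightarrow> real) \<Rightarrow> bool" where
  "square_integrable \<mu> f \<longleftrightarrow> f \<in> borel_measurable \<mu> \<and> integrable \<mu> (\<lambda>x. (f x)\<^sup>2)"

definition is_eigenfun :: "'a measure \<Rightarrow> ('a \<Rightarrow> 'a \<Rightarrow> real) \<Rightarrow> real \<Rightarrow> ('a \<Rightarrow> real) \<Rightarrow> bool" where
  "is_eigenfun \<mu> d lam f \<longleftrightarrow> square_integrable \<mu> f \<and>
     (AE x in \<mu>. dist_kernel_op \<mu> d f x = lam * f x)"

definition is_eigenvalue :: "'a measure \<Rightarrow> ('a \<Rightarrow> 'a \<Rightarrow> real) \<Rightarrow> real \<Rightarrow> bool" where
  "is_eigenvalue \<mu> d lam \<longleftrightarrow> (\<exists>f. is_eigenfun \<mu> d lam f \<and> \<not> (AE x in \<mu>. f x = 0))"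

definition simple_nonzero_spectrum :: "'a measure \<Rightarrow> ('a \<Rightarrow> 'a \<Rightarrow> real) \<Rightarrow> bool" where
  "simple_nonzero_spectrum \<mu> d \<longleftrightarrow>
     (\<forall>lam f g. lam \<noteq> 0 \<and> is_eigenfun \<mu> d lam f \<and> \<not> (AE x in \<mu>. f x = 0)
        \<and> is_eigenfun \<mu> d lam g \<longrightarrow> (\<exists>c. AE x in \<mu>. g x = c * f x))"

text \<open>Admissible spectral data (lam_i, phi_i) of D: the phi_i with lam_i \<noteq> 0 are
  orthonormal real eigenfunctions (evaluated through their continuous representative,
  i.e. the eigen equation holds at every point), the lam_i are ordered by decreasing
  absolute value, and every non-zero eigenvalue of D occurs among them.  Entries with
  lam_i = 0 correspond to zero-eigenvalue eigenfunctions, which are replaced by 0 in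
  the embedding, so no condition is imposed on them.\<close>
definition spectral_data ::
  "'a measure \<Rightarrow> ('a \<Rightarrow> 'a \<Rightarrow> real) \<Rightarrow> (nat \<Rightarrow> real) \<Rightarrow> (nat \<Rightarrow> 'a \<Rightarrow> real) \<Rightarrow> bool" where
  "spectral_data \<mu> d lam phi \<longleftrightarrow>
     (\<forall>i j. i \<le> j \<longrightarrow> \<bar>lam j\<bar> \<le> \<bar>lam i\<bar>) \<and>
     (\<forall>i. lam i \<noteq> 0 \<longrightarrow> square_integrable \<mu> (phi i) \<and>
            (\<forall>x. dist_kernel_op \<mu> d (phi i) x = lam i * phi i x)) \<and>
     (\<forall>i j. lam i \<noteq> 0 \<and> lam j \<noteq> 0 \<longrightarrow>
            (\<integral>x. phi i x * phi j x \<partial>\<mu>) = (if i = j then 1 else 0)) \<and>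
     (\<forall>l. l \<noteq> 0 \<and> is_eigenvalue \<mu> d l \<longrightarrow> (\<exists>i. lam i = l))"

text \<open>alpha_i = sqrt(lam_i) phi_i (principal complex square root, which has positive
  imaginary part for lam_i < 0), and 0 for zero eigenvalues.\<close>
definition scaled_eigenfun :: "(nat \<Rightarrow> real) \<Rightarrow> (nat \<Rightarrow> 'a \<Rightarrow> real) \<Rightarrow> nat \<Rightarrow> 'a \<Rightarrow> complex" where
  "scaled_eigenfun lam phi i x =
     (if lam i = 0 then 0 else csqrt (complex_of_real (lam i)) * complex_of_real (phi i x))"

definition dk_embedding :: "(nat \<Rightarrow> real) \<Rightarrow> (nat \<Rightarrow> 'a \<Rightarrow> real) \<Rightarrow> 'a \<Rightarrow> nat \<Rightarrow> complex" where
  "dk_embedding lam phi x = (\<lambda>i. scaled_eigenfun lam phi i x)"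

end

theory Submission
  imports Defs "HOL-Complex_Analysis.Great_Picard"
begin

text \<open>
  Fix x. Since alpha_i(x) alpha_i(y) = lam_i phi_i(x) phi_i(y), the partial sums
  S_n(x, y) = sum_{i<n} lam_i phi_i(x) phi_i(y) are determined by the embedding, so they are
  the same for X and X'. We show that S_n(x, -) tends to d(x, -) in L2(mu), and likewise to
  d'(x, -) in L2(mu'). The residual w_n = d(x, -) - S_n(x, -) is orthogonal to
  phi_0, ..., phi_(n-1); a variational argument (compactness of D, together with simplicity and
  completeness of the spectral data) bounds the norm of D on this orthogonal complement by
  |lam_n|, and lam_n tends to 0 by Bessel's inequality. As the norm of w_n squared equals
  (D w_n)(x) and the D w_n are uniformly Lipschitz, strict positivity of mu forces w_n to 0.
  Along a common subsequence S_n(x, y) then converges to d(x, y) for mu-almost every y and,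
  by absolute continuity, also to d'(x, y); so d(x, -) = d'(x, -) almost everywhere, hence
  everywhere by continuity and strict positivity of mu.
\<close>

section \<open>Square-integrable functions\<close>

definition L2_inner :: "'a measure \<Rightarrow> ('a \<Rightarrow> real) \<Rightarrow> ('a \<Rightarrow> real) \<Rightarrow> real" where
  "L2_inner M f g = (\<integral>x. f x * g x \<partial>M)"

lemma square_integrable_zero [simp]: "square_integrable M (\<lambda>x. 0)"
  by (simp add: square_integrable_def)

lemma square_integrable_imp_integrable_mult:
  assumes f: "square_integrable M f" and g: "square_integrable M g"
  shows "integrable M (\<lambda>x. f x * g x)"
proof (rule Bochner_Integration.integrable_bound[of M "\<lambda>x. (f x)\<^sup>2 + (g x)\<^sup>2"])
  show "integrable M (\<lambda>x. (f x)\<^sup>2 + (g x)\<^sup>2)"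
    using f g by (simp add: square_integrable_def)
  have [measurable]: "f \<in> borel_measurable M" "g \<in> borel_measurable M"
    using f g by (simp_all add: square_integrable_def)
  show "(\<lambda>x. f x * g x) \<in> borel_measurable M" by measurable
  have "\<bar>a * b\<bar> \<le> a\<^sup>2 + b\<^sup>2" for a b :: real
  proof -
    have "2 * \<bar>a * b\<bar> \<le> a\<^sup>2 + b\<^sup>2"
      using sum_squares_bound[of "\<bar>a\<bar>" "\<bar>b\<bar>"] by (simp add: abs_mult mult.assoc)
    then show ?thesis using abs_ge_zero[of "a * b"] by linarith
  qed
  then show "AE x in M. norm (f x * g x) \<le> norm ((f x)\<^sup>2 + (g x)\<^sup>2)"
    by (auto intro!: AE_I2)
qed

lemma square_integrable_add:
  assumes f: "square_integrable M f" and g: "square_integrable M g"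
  shows "square_integrable M (\<lambda>x. f x + g x)"
proof -
  have "(\<lambda>x. (f x + g x)\<^sup>2) = (\<lambda>x. (f x)\<^sup>2 + 2 * (f x * g x) + (g x)\<^sup>2)"
    by (simp add: power2_eq_square algebra_simps)
  then show ?thesis
    using f g square_integrable_imp_integrable_mult[OF f g]
    by (simp add: square_integrable_def borel_measurable_add)
qed

lemma square_integrable_cmult:
  "square_integrable M f \<Longrightarrow> square_integrable M (\<lambda>x. c * f x)"
  by (simp add: square_integrable_def power_mult_distrib borel_measurable_times)

lemma square_integrable_diff:
  "square_integrable M f \<Longrightarrow> square_integrable M g \<Longrightarrow> square_integrable M (\<lambda>x. f x - g x)"
  using square_integrable_add[of M f "\<lambda>x. -1 * g x"] square_integrable_cmult[of M g "-1"] by simp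

lemma square_integrable_sum:
  "finite A \<Longrightarrow> (\<And>i. i \<in> A \<Longrightarrow> square_integrable M (u i)) \<Longrightarrow>
    square_integrable M (\<lambda>x. \<Sum>i\<in>A. u i x)"
  by (induction A rule: finite_induct) (simp_all add: square_integrable_add)

lemma L2_inner_commute: "L2_inner M f g = L2_inner M g f"
  by (simp add: L2_inner_def mult.commute)

lemma L2_inner_zero_left [simp]: "L2_inner M (\<lambda>x. 0) g = 0"
  and L2_inner_zero_right [simp]: "L2_inner M f (\<lambda>x. 0) = 0"
  by (simp_all add: L2_inner_def)

lemma L2_inner_add_left:
  "square_integrable M f \<Longrightarrow> square_integrable M g \<Longrightarrow> square_integrable M h \<Longrightarrow>
    L2_inner M (\<lambda>x. f x + g x) h = L2_inner M f h + L2_inner M g h"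
  by (simp add: L2_inner_def distrib_right square_integrable_imp_integrable_mult)

lemma L2_inner_diff_left:
  "square_integrable M f \<Longrightarrow> square_integrable M g \<Longrightarrow> square_integrable M h \<Longrightarrow>
    L2_inner M (\<lambda>x. f x - g x) h = L2_inner M f h - L2_inner M g h"
  by (simp add: L2_inner_def left_diff_distrib square_integrable_imp_integrable_mult)

lemma L2_inner_cmult_left: "L2_inner M (\<lambda>x. c * f x) h = c * L2_inner M f h"
  by (simp add: L2_inner_def mult.assoc)

lemma L2_inner_self_cmult: "L2_inner M (\<lambda>x. c * f x) (\<lambda>x. c * f x) = c\<^sup>2 * L2_inner M f f"
  by (simp add: L2_inner_def power2_eq_square mult_ac)

lemma L2_inner_sum_left:
  "finite A \<Longrightarrow> (\<And>i. i \<in> A \<Longrightarrow> square_integrable M (u i)) \<Longrightarrow> square_integrable M h \<Longrightarrow>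
    L2_inner M (\<lambda>x. \<Sum>i\<in>A. u i x) h = (\<Sum>i\<in>A. L2_inner M (u i) h)"
  by (simp add: L2_inner_def sum_distrib_right square_integrable_imp_integrable_mult)

lemma L2_inner_self_nonneg: "0 \<le> L2_inner M f f"
  by (simp add: L2_inner_def)

lemma L2_inner_cong_AE:
  assumes "square_integrable M f" "square_integrable M f'" "square_integrable M g"
    and "AE x in M. f x = f' x"
  shows "L2_inner M f g = L2_inner M f' g"
proof -
  have [measurable]: "f \<in> borel_measurable M" "f' \<in> borel_measurable M" "g \<in> borel_measurable M"
    using assms by (simp_all add: square_integrable_def)
  show ?thesis
    unfolding L2_inner_def by (rule integral_cong_AE) (use assms(4) in auto)
qed

lemma L2_inner_self_eq_0_imp_AE:
  assumes "square_integrable M f" "L2_inner M f f = 0"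
  shows "AE x in M. f x = 0"
proof -
  have "AE x in M. f x * f x = 0"
    using assms square_integrable_imp_integrable_mult[OF assms(1,1)]
    by (simp add: L2_inner_def integral_nonneg_eq_0_iff_AE)
  then show ?thesis by simp
qed

lemma L2_inner_self_add_cmult:
  assumes "square_integrable M f" "square_integrable M g"
  shows "L2_inner M (\<lambda>x. f x + t * g x) (\<lambda>x. f x + t * g x)
    = L2_inner M f f + 2 * t * L2_inner M f g + t\<^sup>2 * L2_inner M g g"
proof -
  have "(\<lambda>x. (f x + t * g x) * (f x + t * g x))
      = (\<lambda>x. f x * f x + (2 * t) * (f x * g x) + t\<^sup>2 * (g x * g x))"
    by (simp add: power2_eq_square algebra_simps)
  then show ?thesis
    using assms by (simp add: L2_inner_def square_integrable_imp_integrable_mult)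
qed

lemma L2_inner_Cauchy_Schwarz:
  assumes f: "square_integrable M f" and g: "square_integrable M g"
  shows "(L2_inner M f g)\<^sup>2 \<le> L2_inner M f f * L2_inner M g g"
proof -
  define A B C where "A = L2_inner M f f" and "B = L2_inner M g g" and "C = L2_inner M f g"
  have quadratic_nonneg: "0 \<le> A + 2 * t * C + t\<^sup>2 * B" for t
    using L2_inner_self_nonneg[of M "\<lambda>x. f x + t * g x"] L2_inner_self_add_cmult[OF f g, of t]
    by (simp add: A_def B_def C_def)
  show ?thesis
  proof (cases "B = 0")
    case True
    have "C = 0"
    proof (rule ccontr)
      assume "C \<noteq> 0"
      have "0 \<le> A + 2 * (- (A + 1) / (2 * C)) * C"
        using quadratic_nonneg[of "- (A + 1) / (2 * C)"] True by simp
      also have "\<dots> = -1" using \<open>C \<noteq> 0\<close> by (simp add: field_simps)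
      finally show False by simp
    qed
    with True show ?thesis by (simp add: A_def B_def C_def)
  next
    case False
    then have "B > 0" using L2_inner_self_nonneg[of M g] by (simp add: A_def B_def C_def)
    have "0 \<le> A + 2 * (- C / B) * C + (- C / B)\<^sup>2 * B" by (rule quadratic_nonneg)
    also have "\<dots> = A - C\<^sup>2 / B" using \<open>B > 0\<close> by (simp add: field_simps power2_eq_square)
    finally show ?thesis using \<open>B > 0\<close> by (simp add: A_def B_def C_def field_simps)
  qed
qed

context finite_measure
begin

lemma square_integrable_imp_integrable: "square_integrable M f \<Longrightarrow> integrable M f"
  by (simp add: square_integrable_def square_integrable_imp_integrable)

lemma square_integrable_if_bounded:
  assumes f: "f \<in> borel_measurable M" and bounded: "\<And>x. \<bar>f x\<bar> \<le> c"
  shows "square_integrable M f"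
proof -
  have "(f x)\<^sup>2 \<le> c\<^sup>2" for x
    using power_mono[OF bounded abs_ge_zero, of x 2] by simp
  then have "integrable M (\<lambda>x. (f x)\<^sup>2)"
    by (intro integrable_const_bound[where B="c\<^sup>2"]) (use f in auto)
  with f show ?thesis by (simp add: square_integrable_def)
qed

lemma L2_inner_self_le_const:
  assumes "square_integrable M f" "\<And>x. (f x)\<^sup>2 \<le> c"
  shows "L2_inner M f f \<le> c * measure M (space M)"
proof -
  have "L2_inner M f f \<le> (\<integral>x. c \<partial>M)"
    unfolding L2_inner_def
    using assms square_integrable_imp_integrable_mult[OF assms(1,1)]
    by (intro integral_mono) (auto simp: power2_eq_square)
  then show ?thesis by (simp add: mult.commute)
qed

lemma L2_inner_dominated_convergence:
  assumes [measurable]: "\<And>k. a k \<in> borel_measurable M" "b \<in> borel_measurable M"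
    and bounded: "\<And>k x. \<bar>a k x\<bar> \<le> c" and lim: "\<And>x. (\<lambda>k. a k x) \<longlonglongrightarrow> b x"
    and h: "square_integrable M h"
  shows "(\<lambda>k. L2_inner M (a k) h) \<longlonglongrightarrow> L2_inner M b h"
  unfolding L2_inner_def
proof (rule integral_dominated_convergence[where w="\<lambda>x. c * \<bar>h x\<bar>"])
  have [measurable]: "h \<in> borel_measurable M" using h by (simp add: square_integrable_def)
  show "(\<lambda>x. b x * h x) \<in> borel_measurable M" "\<And>k. (\<lambda>x. a k x * h x) \<in> borel_measurable M"
    by measurable
  show "integrable M (\<lambda>x. c * \<bar>h x\<bar>)" using square_integrable_imp_integrable[OF h] by simp
  show "AE x in M. (\<lambda>k. a k x * h x) \<longlonglongrightarrow> b x * h x"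
    using lim by (auto intro!: AE_I2 tendsto_mult_right)
  show "AE x in M. norm (a k x * h x) \<le> c * \<bar>h x\<bar>" for k
    using bounded by (auto simp: abs_mult mult_right_mono)
qed

lemma L2_inner_self_dominated_convergence:
  assumes [measurable]: "\<And>k. a k \<in> borel_measurable M" "b \<in> borel_measurable M"
    and bounded: "\<And>k x. \<bar>a k x\<bar> \<le> c" and lim: "\<And>x. (\<lambda>k. a k x) \<longlonglongrightarrow> b x"
  shows "(\<lambda>k. L2_inner M (a k) (a k)) \<longlonglongrightarrow> L2_inner M b b"
  unfolding L2_inner_def
proof (rule integral_dominated_convergence[where w="\<lambda>x. c * c"])
  show "(\<lambda>x. b x * b x) \<in> borel_measurable M" "\<And>k. (\<lambda>x. a k x * a k x) \<in> borel_measurable M"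
    by measurable
  show "AE x in M. (\<lambda>k. a k x * a k x) \<longlonglongrightarrow> b x * b x"
    using lim by (auto intro!: AE_I2 tendsto_mult)
  have "\<bar>a k x * a k x\<bar> \<le> c * c" for k x
    unfolding abs_mult by (rule mult_mono[OF bounded bounded]) (auto intro: order_trans[OF abs_ge_zero bounded])
  then show "AE x in M. norm (a k x * a k x) \<le> c * c" for k
    by simp
qed simp

end
lemma (in pair_sigma_finite) integrable_abs_mult_fst_snd:
  fixes f g :: "_ \<Rightarrow> real"
  assumes f: "integrable M1 f" and g: "integrable M2 g"
  shows "integrable (M1 \<Otimes>\<^sub>M M2) (\<lambda>p. \<bar>f (fst p)\<bar> * \<bar>g (snd p)\<bar>)"
proof -
  have [measurable]: "f \<in> borel_measurable M1" "g \<in> borel_measurable M2" using f g by auto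
  have "(\<integral>\<^sup>+p. ennreal (norm (\<bar>f (fst p)\<bar> * \<bar>g (snd p)\<bar>)) \<partial>(M1 \<Otimes>\<^sub>M M2))
      = (\<integral>\<^sup>+x. \<integral>\<^sup>+y. ennreal \<bar>f x\<bar> * ennreal \<bar>g y\<bar> \<partial>M2 \<partial>M1)"
    by (subst M2.nn_integral_fst[symmetric]) (auto simp: ennreal_mult abs_mult)
  also have "\<dots> = (\<integral>\<^sup>+x. ennreal \<bar>f x\<bar> \<partial>M1) * (\<integral>\<^sup>+y. ennreal \<bar>g y\<bar> \<partial>M2)"
    by (simp add: nn_integral_cmult nn_integral_multc)
  also have "\<dots> < \<infinity>"
    using f g unfolding integrable_iff_bounded by (simp add: ennreal_mult_less_top)
  finally show ?thesis unfolding integrable_iff_bounded by simp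
qed

section \<open>Compact metric measure spaces\<close>

locale compact_mm_space =
  fixes M :: "'a::topological_space measure" and d :: "'a \<Rightarrow> 'a \<Rightarrow> real"
  assumes compact_UNIV: "compact (UNIV :: 'a set)"
    and sets_M: "sets M = sets borel"
    and finite_measure_M: "finite_measure M"
    and strictly_positive_M: "strictly_positive M"
    and metric_inducing_d: "metric_inducing_topology d"
begin

sublocale metric: Metric_space UNIV d
  using metric_inducing_d by (simp add: metric_inducing_topology_def)

sublocale M: finite_measure M
  by (rule finite_measure_M)

lemma mtopology_eq_euclidean: "metric.mtopology = euclidean"
  using metric_inducing_d by (simp add: metric_inducing_topology_def)

lemma space_M [simp]: "space M = UNIV"
  using sets_eq_imp_space_eq[OF sets_M] by simp

lemma d_triangle: "d x y \<le> d x z + d z y"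
  by (rule metric.triangle) auto

lemma abs_d_diff_le: "\<bar>d x z - d y z\<bar> \<le> d x y"
  using d_triangle[of x z y] d_triangle[of y z x] metric.commute[of x y] by linarith

lemma open_mball: "open (metric.mball x r)"
  using metric.openin_mball[of x r] by (simp add: mtopology_eq_euclidean)

lemma open_iff_mball: "open S \<longleftrightarrow> (\<forall>x\<in>S. \<exists>r>0. metric.mball x r \<subseteq> S)"
proof -
  have "open S \<longleftrightarrow> openin metric.mtopology S" by (simp add: mtopology_eq_euclidean)
  then show ?thesis unfolding metric.openin_mtopology by blast
qed

lemma continuous_on_if_Lipschitz:
  fixes f :: "'a \<Rightarrow> real"
  assumes Lipschitz: "\<And>x y. \<bar>f x - f y\<bar> \<le> L * d x y"
  shows "continuous_on UNIV f"
proof -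
  have "open (f -` B)" if "open B" for B
    unfolding open_iff_mball
  proof
    fix x assume "x \<in> f -` B"
    then obtain e where "e > 0" and ball_e: "ball (f x) e \<subseteq> B"
      using \<open>open B\<close> open_contains_ball by blast
    define r where "r = e / (\<bar>L\<bar> + 1)"
    have "r > 0" using \<open>e > 0\<close> by (simp add: r_def)
    have "metric.mball x r \<subseteq> f -` B"
    proof
      fix y assume "y \<in> metric.mball x r"
      then have "d x y < r" by simp
      have "L * d x y \<le> \<bar>L\<bar> * d x y" by (rule mult_right_mono) simp_all
      with Lipschitz[of x y] have "\<bar>f x - f y\<bar> \<le> \<bar>L\<bar> * d x y" by linarith
      also have "\<dots> \<le> \<bar>L\<bar> * r" using \<open>d x y < r\<close> by (simp add: mult_left_mono)
      also have "\<dots> < e" using \<open>e > 0\<close> by (simp add: r_def field_simps)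
      finally have "f y \<in> ball (f x) e" by (simp add: dist_real_def)
      then show "y \<in> f -` B" using ball_e by auto
    qed
    then show "\<exists>r>0. metric.mball x r \<subseteq> f -` B" using \<open>r > 0\<close> by blast
  qed
  then show ?thesis by (simp add: continuous_on_open_vimage)
qed

lemma continuous_on_d: "continuous_on UNIV (d x)"
  by (rule continuous_on_if_Lipschitz[where L=1]) (simp add: abs_d_diff_le metric.commute)

lemma borel_measurable_if_continuous:
  "continuous_on UNIV f \<Longrightarrow> (f :: 'a \<Rightarrow> real) \<in> borel_measurable M"
  using borel_measurable_continuous_onI measurable_cong_sets[OF sets_M refl] by blast

lemma borel_measurable_d [measurable]: "d x \<in> borel_measurable M"
  by (rule borel_measurable_if_continuous[OF continuous_on_d])

lemma bdd_above_d: "bdd_above (range (\<lambda>p. d (fst p) (snd p)))"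
proof -
  obtain x0 :: 'a where True by simp
  have "bounded (range (d x0))"
    by (rule compact_imp_bounded[OF compact_continuous_image[OF continuous_on_d compact_UNIV]])
  then obtain b where b: "\<And>y. \<bar>d x0 y\<bar> \<le> b" by (auto simp: bounded_iff)
  have "d x y \<le> 2 * b" for x y
    using d_triangle[of x y x0] b[of x] b[of y] metric.commute[of x x0] by linarith
  then show ?thesis by (intro bdd_aboveI[where M="2 * b"]) auto
qed

definition diam :: real where
  "diam = (SUP p. d (fst p) (snd p))"

lemma d_le_diam: "d x y \<le> diam"
  using cSUP_upper[OF UNIV_I bdd_above_d, of "(x, y)"] by (simp add: diam_def)

lemma diam_nonneg: "0 \<le> diam"
  using d_le_diam[of undefined undefined] by simp

lemma dense_sequence_exists: "\<exists>q :: nat \<Rightarrow> 'a. \<forall>x. \<forall>e>0. \<exists>j. d x (q j) < e"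
proof -
  have "\<exists>F. finite F \<and> (\<forall>x. \<exists>a\<in>F. d a x < e)" if "e > 0" for e
  proof -
    have UNIV_cover: "UNIV \<subseteq> (\<Union>a\<in>UNIV. metric.mball a e)" using that by auto
    obtain F where "F \<subseteq> UNIV" "finite F" and cover: "UNIV \<subseteq> (\<Union>a\<in>F. metric.mball a e)"
      by (rule compactE_image[OF compact_UNIV, of UNIV "\<lambda>a. metric.mball a e"])
        (use open_mball UNIV_cover in auto)
    have "\<exists>a\<in>F. d a x < e" for x
    proof -
      from cover obtain a where "a \<in> F" "x \<in> metric.mball a e" by blast
      then show ?thesis by auto
    qed
    with \<open>finite F\<close> show ?thesis by blast
  qed
  then have "\<forall>k::nat. \<exists>F. finite F \<and> (\<forall>x. \<exists>a\<in>F. d a x < 1 / Suc k)"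
    by simp
  then have "\<exists>F. \<forall>k. finite (F k) \<and> (\<forall>x. \<exists>a\<in>F k. d a x < 1 / Suc k)"
    by (rule choice)
  then obtain F where F: "\<forall>k. finite (F k) \<and> (\<forall>x. \<exists>a\<in>F k. d a x < 1 / Suc k)"
    by blast
  define Q where "Q = (\<Union>k. F k)"
  have "countable Q" unfolding Q_def using F by (simp add: countable_finite)
  have "\<exists>j. d x (from_nat_into Q j) < e" if "e > 0" for x e
  proof -
    obtain k :: nat where "1 / Suc k < e"
      using \<open>e > 0\<close> reals_Archimedean by (auto simp: inverse_eq_divide)
    moreover obtain a where "a \<in> F k" "d a x < 1 / Suc k" using F by blast
    ultimately have "a \<in> Q" "d x a < e" by (auto simp: Q_def metric.commute[of x a])
    then show ?thesis using from_nat_into_surj[OF \<open>countable Q\<close>] by metis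
  qed
  then show ?thesis by (intro exI[of _ "from_nat_into Q"]) blast
qed

text \<open>The type need not be second countable, so measurability of d for the product
  sigma-algebra is obtained by approximating d(x, y) with min_(j<=m) d(q_j, x) + d(q_j, y)
  for a dense sequence q.\<close>

lemma borel_measurable_d_pair [measurable]:
  "(\<lambda>p. d (fst p) (snd p)) \<in> borel_measurable (M \<Otimes>\<^sub>M M)"
proof -
  obtain q :: "nat \<Rightarrow> 'a" where q: "\<forall>x. \<forall>e>0. \<exists>j. d x (q j) < e"
    using dense_sequence_exists by blast
  define G where "G m p = Min ((\<lambda>j. d (q j) (fst p) + d (q j) (snd p)) ` {..m})" for m p
  have G_measurable: "G m \<in> borel_measurable (M \<Otimes>\<^sub>M M)" for m
    unfolding G_def
    using measurable_compose[OF measurable_fst borel_measurable_d]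
      measurable_compose[OF measurable_snd borel_measurable_d]
    by (intro borel_measurable_Min borel_measurable_add) auto
  have G_tendsto: "(\<lambda>m. G m (x, y)) \<longlonglongrightarrow> d x y" for x y
  proof (rule metric_LIMSEQ_I)
    fix r :: real assume "r > 0"
    then obtain j where j: "d x (q j) < r / 2" using q[rule_format, where x=x and e="r / 2"] by auto
    have "dist (G m (x, y)) (d x y) < r" if "j \<le> m" for m
    proof -
      have "d x y \<le> d (q i) x + d (q i) y" for i
        using d_triangle[of x y "q i"] metric.commute[of x "q i"] by simp
      then have "d x y \<le> G m (x, y)"
        by (simp add: G_def Min_ge_iff)
      moreover have "G m (x, y) \<le> d (q j) x + d (q j) y"
        unfolding G_def using that by (intro Min_le) auto
      moreover have "d (q j) y \<le> d x (q j) + d x y"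
        using d_triangle[of "q j" y x] metric.commute[of x "q j"] by simp
      ultimately show ?thesis using j metric.commute[of x "q j"] by (simp add: dist_real_def)
    qed
    then show "\<exists>m0. \<forall>m\<ge>m0. dist (G m (x, y)) (d x y) < r" by blast
  qed
  show ?thesis
    by (rule borel_measurable_LIMSEQ_real[OF _ G_measurable]) (use G_tendsto in force)
qed

subsection \<open>The distance kernel operator\<close>

abbreviation D :: "('a \<Rightarrow> real) \<Rightarrow> 'a \<Rightarrow> real" where
  "D \<equiv> dist_kernel_op M d"

definition d_L2_bound :: real where
  "d_L2_bound = diam\<^sup>2 * measure M UNIV"

lemma kernel_op_eq_L2_inner: "D f x = L2_inner M f (d x)"
  by (simp add: dist_kernel_op_def L2_inner_def)

lemma square_integrable_d: "square_integrable M (d x)"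
  by (rule M.square_integrable_if_bounded[where c=diam, OF borel_measurable_d]) (simp add: d_le_diam)

lemma L2_inner_d_le: "L2_inner M (d x) (d x) \<le> d_L2_bound"
proof -
  have "(d x y)\<^sup>2 \<le> diam\<^sup>2" for y
    using d_le_diam[of x y] by (simp add: power_mono)
  then show ?thesis
    using M.L2_inner_self_le_const[OF square_integrable_d] by (simp add: d_L2_bound_def)
qed

lemma kernel_op_square_le:
  assumes "square_integrable M f"
  shows "(D f x)\<^sup>2 \<le> d_L2_bound * L2_inner M f f"
proof -
  have "(D f x)\<^sup>2 \<le> L2_inner M f f * L2_inner M (d x) (d x)"
    unfolding kernel_op_eq_L2_inner by (rule L2_inner_Cauchy_Schwarz[OF assms square_integrable_d])
  also have "\<dots> \<le> L2_inner M f f * d_L2_bound"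
    by (rule mult_left_mono[OF L2_inner_d_le L2_inner_self_nonneg])
  finally show ?thesis by (simp add: mult.commute)
qed

lemma abs_kernel_op_le:
  "square_integrable M f \<Longrightarrow> \<bar>D f x\<bar> \<le> sqrt (d_L2_bound * L2_inner M f f)"
  using real_sqrt_le_mono[OF kernel_op_square_le] by simp

lemma kernel_op_Lipschitz:
  assumes f: "square_integrable M f"
  shows "\<bar>D f x - D f x'\<bar> \<le> sqrt (measure M UNIV * L2_inner M f f) * d x x'"
proof -
  define h where "h y = d x y - d x' y" for y
  have h: "square_integrable M h"
    unfolding h_def by (intro square_integrable_diff square_integrable_d)
  have "L2_inner M h f = L2_inner M (d x) f - L2_inner M (d x') f"
    unfolding h_def by (rule L2_inner_diff_left[OF square_integrable_d square_integrable_d f])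
  then have "D f x - D f x' = L2_inner M h f"
    by (simp add: kernel_op_eq_L2_inner L2_inner_commute[of M f])
  then have "(D f x - D f x')\<^sup>2 \<le> L2_inner M h h * L2_inner M f f"
    using L2_inner_Cauchy_Schwarz[OF h f] by simp
  also have "\<dots> \<le> ((d x x')\<^sup>2 * measure M UNIV) * L2_inner M f f"
  proof (rule mult_right_mono[OF _ L2_inner_self_nonneg])
    have "(h y)\<^sup>2 \<le> (d x x')\<^sup>2" for y
      using abs_d_diff_le[of x y x'] unfolding h_def by (metis abs_ge_zero power2_abs power_mono)
    then show "L2_inner M h h \<le> (d x x')\<^sup>2 * measure M UNIV"
      using M.L2_inner_self_le_const[OF h] by simp
  qed
  finally show ?thesis
    using real_sqrt_le_mono by (fastforce simp: real_sqrt_mult mult_ac)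
qed

lemma borel_measurable_kernel_op: "square_integrable M f \<Longrightarrow> D f \<in> borel_measurable M"
  by (rule borel_measurable_if_continuous[OF continuous_on_if_Lipschitz[OF kernel_op_Lipschitz]])

lemma square_integrable_kernel_op: "square_integrable M f \<Longrightarrow> square_integrable M (D f)"
  by (rule M.square_integrable_if_bounded[OF borel_measurable_kernel_op abs_kernel_op_le])

lemma L2_inner_kernel_op_le:
  "square_integrable M f \<Longrightarrow>
    L2_inner M (D f) (D f) \<le> d_L2_bound * L2_inner M f f * measure M UNIV"
  using M.L2_inner_self_le_const[OF square_integrable_kernel_op kernel_op_square_le] by simp

lemma kernel_op_zero [simp]: "D (\<lambda>y. 0) x = 0"
  by (simp add: dist_kernel_op_def)

lemma kernel_op_add:
  "square_integrable M f \<Longrightarrow> square_integrable M g \<Longrightarrow> D (\<lambda>y. f y + g y) x = D f x + D g x"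
  by (simp add: kernel_op_eq_L2_inner L2_inner_add_left square_integrable_d)

lemma kernel_op_cmult: "D (\<lambda>y. c * f y) x = c * D f x"
  by (simp add: kernel_op_eq_L2_inner L2_inner_cmult_left)

lemma kernel_op_cong_AE:
  "square_integrable M f \<Longrightarrow> square_integrable M g \<Longrightarrow> AE y in M. f y = g y \<Longrightarrow> D f x = D g x"
  unfolding kernel_op_eq_L2_inner by (rule L2_inner_cong_AE[OF _ _ square_integrable_d])

lemma kernel_op_self_adjoint:
  assumes f: "square_integrable M f" and g: "square_integrable M g"
  shows "L2_inner M (D f) g = L2_inner M f (D g)"
proof -
  interpret pair_sigma_finite M M ..
  have [measurable]: "f \<in> borel_measurable M" "g \<in> borel_measurable M"
    using f g by (simp_all add: square_integrable_def)
  define F where "F z y = f z * d y z * g y" for z y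
  have "integrable (M \<Otimes>\<^sub>M M) (\<lambda>(z, y). F z y)"
  proof (rule Bochner_Integration.integrable_bound)
    show "integrable (M \<Otimes>\<^sub>M M) (\<lambda>p. diam * (\<bar>f (fst p)\<bar> * \<bar>g (snd p)\<bar>))"
      using integrable_abs_mult_fst_snd[OF M.square_integrable_imp_integrable[OF f]
          M.square_integrable_imp_integrable[OF g]] by simp
    have "(\<lambda>p. d (snd p) (fst p)) \<in> borel_measurable (M \<Otimes>\<^sub>M M)"
      using borel_measurable_d_pair by (simp add: metric.commute)
    then show "(\<lambda>(z, y). F z y) \<in> borel_measurable (M \<Otimes>\<^sub>M M)"
      unfolding F_def by (simp add: case_prod_beta')
    have "\<bar>F z y\<bar> \<le> diam * (\<bar>f z\<bar> * \<bar>g y\<bar>)" for z y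
      using mult_right_mono[OF d_le_diam[of y z], of "\<bar>f z\<bar> * \<bar>g y\<bar>"]
      by (simp add: F_def abs_mult mult_ac)
    then show "AE p in M \<Otimes>\<^sub>M M. norm ((\<lambda>(z, y). F z y) p)
        \<le> norm (diam * (\<bar>f (fst p)\<bar> * \<bar>g (snd p)\<bar>))"
      using diam_nonneg by (auto simp: abs_mult)
  qed
  then have "(\<integral>y. (\<integral>z. F z y \<partial>M) \<partial>M) = (\<integral>z. (\<integral>y. F z y \<partial>M) \<partial>M)"
    by (rule Fubini_integral)
  moreover have "L2_inner M (D f) g = (\<integral>y. (\<integral>z. F z y \<partial>M) \<partial>M)"
    by (simp add: L2_inner_def dist_kernel_op_def F_def)
  moreover have "L2_inner M f (D g) = (\<integral>z. (\<integral>y. F z y \<partial>M) \<partial>M)"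
  proof -
    have "(\<integral>y. F z y \<partial>M) = (\<integral>y. f z * (g y * d z y) \<partial>M)" for z
      by (simp add: F_def metric.commute[of _ z] mult_ac)
    then show ?thesis by (simp add: L2_inner_def dist_kernel_op_def)
  qed
  ultimately show ?thesis by simp
qed

lemma d_L2_bound_nonneg: "0 \<le> d_L2_bound"
  by (simp add: d_L2_bound_def)

lemma equi_Lipschitz_convergent_subsequence:
  fixes F :: "nat \<Rightarrow> 'a \<Rightarrow> real"
  assumes bounded: "\<And>k x. \<bar>F k x\<bar> \<le> B"
    and Lipschitz: "\<And>k x y. \<bar>F k x - F k y\<bar> \<le> L * d x y"
  shows "\<exists>r. strict_mono r \<and> (\<forall>x. convergent (\<lambda>k. F (r k) x))"
proof -
  obtain q :: "nat \<Rightarrow> 'a" where q: "\<forall>x. \<forall>e>0. \<exists>j. d x (q j) < e"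
    using dense_sequence_exists by blast
  have "countable (range q)" by simp
  moreover have "norm (F k x) \<le> B" if "x \<in> range q" for k x
    using bounded by simp
  ultimately obtain r where "strict_mono r"
    and convergent_on_q: "\<And>x. x \<in> range q \<Longrightarrow> \<exists>l. (\<lambda>k. F (r k) x) \<longlonglongrightarrow> l"
    by (rule function_convergent_subsequence[of "range q" F B]) auto
  have "Cauchy (\<lambda>k. F (r k) x)" for x
  proof (rule metric_CauchyI)
    fix e :: real assume "e > 0"
    define L' where "L' = \<bar>L\<bar> + 1"
    have "L' > 0" by (simp add: L'_def add.commute add_pos_nonneg)
    then obtain j where j: "d x (q j) < e / (3 * L')"
      using q[rule_format, where x=x and e="e / (3 * L')"] \<open>e > 0\<close> by auto
    have "L * d x (q j) \<le> L' * d x (q j)"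
      by (rule mult_right_mono) (simp_all add: L'_def)
    also have "\<dots> < e / 3"
      using mult_strict_left_mono[OF j \<open>L' > 0\<close>] \<open>L' > 0\<close> by simp
    finally have close: "L * d x (q j) < e / 3" .
    have "Cauchy (\<lambda>k. F (r k) (q j))"
      using convergent_on_q[of "q j"] convergent_Cauchy by (auto simp: convergent_def)
    then obtain N where N: "\<And>m n. N \<le> m \<Longrightarrow> N \<le> n \<Longrightarrow> dist (F (r m) (q j)) (F (r n) (q j)) < e / 3"
      using \<open>e > 0\<close> unfolding Cauchy_def by (meson divide_pos_pos zero_less_numeral)
    have "dist (F (r m) x) (F (r n) x) < e" if "N \<le> m" "N \<le> n" for m n
    proof -
      have "\<bar>F (r m) x - F (r m) (q j)\<bar> < e / 3" "\<bar>F (r n) x - F (r n) (q j)\<bar> < e / 3"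
        using Lipschitz[of "r m" x "q j"] Lipschitz[of "r n" x "q j"] close by linarith+
      moreover have "\<bar>F (r m) (q j) - F (r n) (q j)\<bar> < e / 3"
        using N[OF that] by (simp add: dist_real_def)
      ultimately show ?thesis unfolding dist_real_def by arith
    qed
    then show "\<exists>N. \<forall>m\<ge>N. \<forall>n\<ge>N. dist (F (r m) x) (F (r n) x) < e" by blast
  qed
  with \<open>strict_mono r\<close> show ?thesis by (auto simp: Cauchy_convergent_iff)
qed

lemma kernel_op_convergent_subsequence:
  fixes w :: "nat \<Rightarrow> 'a \<Rightarrow> real"
  assumes "\<And>k. square_integrable M (w k)" "\<And>k. L2_inner M (w k) (w k) \<le> 1"
  shows "\<exists>r g. strict_mono r \<and> (\<forall>y. (\<lambda>k. D (w (r k)) y) \<longlonglongrightarrow> g y)"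
proof -
  have "\<bar>D (w k) y\<bar> \<le> sqrt d_L2_bound" for k y
    using abs_kernel_op_le[OF assms(1), of k y]
      real_sqrt_le_mono[OF mult_left_le[OF assms(2) d_L2_bound_nonneg]] by (rule order_trans)
  moreover have "\<bar>D (w k) y - D (w k) y'\<bar> \<le> sqrt (measure M UNIV) * d y y'" for k y y'
  proof -
    have "sqrt (measure M UNIV * L2_inner M (w k) (w k)) \<le> sqrt (measure M UNIV)"
      using assms(2)[of k] by (simp add: mult_left_le)
    from mult_right_mono[OF this metric.nonneg] show ?thesis
      using kernel_op_Lipschitz[OF assms(1), of k y y'] by (rule order_trans[rotated])
  qed
  ultimately obtain r where "strict_mono r" "\<forall>y. convergent (\<lambda>k. D (w (r k)) y)"
    using equi_Lipschitz_convergent_subsequence[of "\<lambda>k. D (w k)"] by blast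
  then show ?thesis
    by (intro exI[of _ r] exI[of _ "\<lambda>y. lim (\<lambda>k. D (w (r k)) y)"]) (simp add: convergent_LIMSEQ_iff)
qed

lemma measure_mball_pos: "r > 0 \<Longrightarrow> measure M (metric.mball x r) > 0"
  using strictly_positive_M open_mball[of x r] M.emeasure_eq_measure[of "metric.mball x r"]
  by (force simp: strictly_positive_def)

lemma L2_inner_self_ge_on_mball:
  assumes u: "square_integrable M u" and Lipschitz: "\<And>y. \<bar>u y - u x\<bar> \<le> L * d x y"
    and "0 \<le> L" "c \<le> u x" "L * r \<le> c / 2"
  shows "(c / 2)\<^sup>2 * measure M (metric.mball x r) \<le> L2_inner M u u"
proof -
  have "(c / 2)\<^sup>2 * indicator (metric.mball x r) y \<le> u y * u y" for y
  proof (cases "y \<in> metric.mball x r")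
    case True
    then have "L * d x y \<le> L * r" using \<open>0 \<le> L\<close> by (simp add: mult_left_mono)
    then have "c / 2 \<le> u y" using Lipschitz[of y] assms(4,5) by linarith
    moreover have "0 \<le> c"
      using \<open>L * r \<le> c / 2\<close> \<open>L * d x y \<le> L * r\<close> mult_nonneg_nonneg[OF \<open>0 \<le> L\<close> metric.nonneg[of x y]]
      by linarith
    ultimately have "(c / 2) * (c / 2) \<le> u y * u y" by (intro mult_mono) auto
    then show ?thesis using True by (simp add: power2_eq_square)
  qed simp
  moreover have "metric.mball x r \<in> sets M"
    using open_mball sets_M by simp
  moreover have "integrable M (\<lambda>y. (c / 2)\<^sup>2 * indicator (metric.mball x r) y)"
    using \<open>metric.mball x r \<in> sets M\<close> by (auto intro!: integrable_mult_right integrable_real_indicator simp: less_top[symmetric])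
  ultimately have "(\<integral>y. (c / 2)\<^sup>2 * indicator (metric.mball x r) y \<partial>M) \<le> L2_inner M u u"
    unfolding L2_inner_def using square_integrable_imp_integrable_mult[OF u u]
    by (intro integral_mono) auto
  with \<open>metric.mball x r \<in> sets M\<close> show ?thesis by simp
qed

lemma continuous_eq_if_AE_eq:
  fixes f g :: "'a \<Rightarrow> real"
  assumes "continuous_on UNIV f" "continuous_on UNIV g" and "AE y in M. f y = g y"
  shows "f = g"
proof -
  have "open {y. f y \<noteq> g y}" by (rule open_Collect_neq[OF assms(1,2)])
  then have "{y. f y \<noteq> g y} \<in> sets M" using sets_M by simp
  then have "emeasure M {y. f y \<noteq> g y} = 0"
    using assms(3) AE_iff_measurable[of "{y. f y \<noteq> g y}" M "\<lambda>y. f y = g y"] by simp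
  with \<open>open {y. f y \<noteq> g y}\<close> have "{y. f y \<noteq> g y} = {}"
    using strictly_positive_M by (force simp: strictly_positive_def)
  then show ?thesis by auto
qed

end

section \<open>Expansion of the metric in the eigenfunctions\<close>

locale mm_spectral_data = compact_mm_space +
  fixes lam :: "nat \<Rightarrow> real" and phi :: "nat \<Rightarrow> 'a \<Rightarrow> real"
  assumes simple_spectrum: "simple_nonzero_spectrum M d"
    and spectral_data: "spectral_data M d lam phi"
begin

lemma abs_lam_antimono: "i \<le> j \<Longrightarrow> \<bar>lam j\<bar> \<le> \<bar>lam i\<bar>"
  using spectral_data by (simp add: spectral_data_def)

lemma square_integrable_phi: "lam i \<noteq> 0 \<Longrightarrow> square_integrable M (phi i)"
  using spectral_data by (simp add: spectral_data_def)

lemma kernel_op_phi: "lam i \<noteq> 0 \<Longrightarrow> D (phi i) x = lam i * phi i x"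
  using spectral_data by (simp add: spectral_data_def)

lemma L2_inner_phi:
  "lam i \<noteq> 0 \<Longrightarrow> lam j \<noteq> 0 \<Longrightarrow> L2_inner M (phi i) (phi j) = (if i = j then 1 else 0)"
  using spectral_data by (simp add: spectral_data_def L2_inner_def)

lemma nonzero_eigenvalue_in_range: "l \<noteq> 0 \<Longrightarrow> is_eigenvalue M d l \<Longrightarrow> \<exists>i. lam i = l"
  using spectral_data by (simp add: spectral_data_def)

text \<open>As in the definition of the embedding, eigenfunctions of eigenvalue zero are replaced
  by 0; this makes psi an orthonormal family up to zero entries.\<close>

definition psi :: "nat \<Rightarrow> 'a \<Rightarrow> real" where
  "psi i = (if lam i = 0 then (\<lambda>_. 0) else phi i)"

lemma square_integrable_psi: "square_integrable M (psi i)"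
  by (simp add: psi_def square_integrable_phi)

lemma kernel_op_psi: "D (psi i) = (\<lambda>x. lam i * psi i x)"
  by (auto simp: psi_def kernel_op_phi)

lemma L2_inner_psi: "L2_inner M (psi i) (psi j) = (if i = j \<and> lam i \<noteq> 0 then 1 else 0)"
  by (simp add: psi_def L2_inner_phi)

lemma lam_mult_psi_psi: "lam i * psi i x * psi i y = lam i * phi i x * phi i y"
  by (simp add: psi_def)

definition orth_first :: "nat \<Rightarrow> ('a \<Rightarrow> real) \<Rightarrow> bool" where
  "orth_first n f \<longleftrightarrow> square_integrable M f \<and> (\<forall>i<n. L2_inner M f (psi i) = 0)"

lemma orth_first_zero: "orth_first n (\<lambda>x. 0)"
  by (simp add: orth_first_def)

lemma orth_first_cmult: "orth_first n f \<Longrightarrow> orth_first n (\<lambda>x. c * f x)"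
  by (simp add: orth_first_def square_integrable_cmult L2_inner_cmult_left)

lemma orth_first_add: "orth_first n f \<Longrightarrow> orth_first n g \<Longrightarrow> orth_first n (\<lambda>x. f x + g x)"
  by (simp add: orth_first_def square_integrable_add L2_inner_add_left square_integrable_psi)

lemma orth_first_kernel_op:
  assumes "orth_first n f"
  shows "orth_first n (D f)"
proof -
  have f: "square_integrable M f" using assms by (simp add: orth_first_def)
  have "L2_inner M (D f) (psi i) = lam i * L2_inner M f (psi i)" for i
    by (simp add: kernel_op_self_adjoint[OF f square_integrable_psi] kernel_op_psi
        L2_inner_commute[of M f] L2_inner_cmult_left)
  with assms show ?thesis by (simp add: orth_first_def square_integrable_kernel_op)
qed

definition residual :: "('a \<Rightarrow> real) \<Rightarrow> nat \<Rightarrow> 'a \<Rightarrow> real" where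
  "residual f n y = f y - (\<Sum>i<n. L2_inner M f (psi i) * psi i y)"

lemma L2_inner_psi_sum_left:
  "square_integrable M g \<Longrightarrow>
    L2_inner M (\<lambda>y. \<Sum>i<n. c i * psi i y) g = (\<Sum>i<n. c i * L2_inner M (psi i) g)"
  by (simp add: L2_inner_sum_left square_integrable_cmult square_integrable_psi L2_inner_cmult_left)

lemma square_integrable_psi_sum: "square_integrable M (\<lambda>y. \<Sum>i<n. c i * psi i y)"
  by (simp add: square_integrable_sum square_integrable_cmult square_integrable_psi)

context
  fixes f :: "'a \<Rightarrow> real"
  assumes f: "square_integrable M f"
begin

lemma square_integrable_residual: "square_integrable M (residual f n)"
  unfolding residual_def[abs_def] by (intro square_integrable_diff f square_integrable_psi_sum)

lemma orth_first_residual: "orth_first n (residual f n)"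
proof -
  have "L2_inner M (residual f n) (psi j) = 0" if "j < n" for j
  proof -
    have "(\<Sum>i<n. L2_inner M f (psi i) * L2_inner M (psi i) (psi j))
        = (\<Sum>i<n. if i = j then (if lam j \<noteq> 0 then L2_inner M f (psi j) else 0) else 0)"
      by (rule sum.cong) (auto simp: L2_inner_psi)
    also have "\<dots> = (if lam j \<noteq> 0 then L2_inner M f (psi j) else 0)"
      using that by simp
    finally have "(\<Sum>i<n. L2_inner M f (psi i) * L2_inner M (psi i) (psi j))
        = (if lam j \<noteq> 0 then L2_inner M f (psi j) else 0)" .
    then show ?thesis
      unfolding residual_def[abs_def]
      by (simp add: L2_inner_diff_left f square_integrable_psi_sum square_integrable_psi
          L2_inner_psi_sum_left) (simp add: psi_def)
  qed
  then show ?thesis by (simp add: orth_first_def square_integrable_residual)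
qed

lemma L2_inner_residual_self: "L2_inner M (residual f n) (residual f n) = L2_inner M f (residual f n)"
proof -
  have "L2_inner M (\<lambda>y. \<Sum>i<n. L2_inner M f (psi i) * psi i y) (residual f n) = 0"
    using orth_first_residual[of n]
    by (simp add: L2_inner_psi_sum_left square_integrable_residual orth_first_def L2_inner_commute[of M "psi _"])
  moreover have "L2_inner M (residual f n) (residual f n)
      = L2_inner M f (residual f n) - L2_inner M (\<lambda>y. \<Sum>i<n. L2_inner M f (psi i) * psi i y) (residual f n)"
    by (subst (1) residual_def[abs_def])
      (rule L2_inner_diff_left[OF f square_integrable_psi_sum square_integrable_residual])
  ultimately show ?thesis by simp
qed

lemma L2_inner_residual: "L2_inner M f (residual f n) = L2_inner M f f - (\<Sum>i<n. (L2_inner M f (psi i))\<^sup>2)"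
proof -
  have "L2_inner M (residual f n) f
      = L2_inner M f f - (\<Sum>i<n. L2_inner M f (psi i) * L2_inner M (psi i) f)"
    unfolding residual_def[abs_def]
    by (simp add: L2_inner_diff_left f square_integrable_psi_sum L2_inner_psi_sum_left)
  also have "(\<Sum>i<n. L2_inner M f (psi i) * L2_inner M (psi i) f) = (\<Sum>i<n. (L2_inner M f (psi i))\<^sup>2)"
    by (simp add: L2_inner_commute[of M "psi _" f] power2_eq_square)
  finally show ?thesis using L2_inner_commute[of M f "residual f n"] by simp
qed

lemma L2_inner_residual_le: "L2_inner M (residual f n) (residual f n) \<le> L2_inner M f f"
  using L2_inner_residual_self L2_inner_residual by (simp add: sum_nonneg)

end

lemma L2_inner_d_psi: "L2_inner M (d x) (psi i) = lam i * psi i x"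
  by (simp add: L2_inner_commute[of M "d x"] kernel_op_eq_L2_inner[symmetric] kernel_op_psi)

lemma sum_lam_square_le: "(\<Sum>i<n. (lam i)\<^sup>2) \<le> d_L2_bound * measure M UNIV"
proof -
  define S where "S x = (\<Sum>i<n. (lam i * psi i x)\<^sup>2)" for x
  have S_le: "S x \<le> d_L2_bound" for x
  proof -
    have "S x \<le> L2_inner M (d x) (d x)"
      using L2_inner_self_nonneg[of M "residual (d x) n"]
        L2_inner_residual_self[OF square_integrable_d] L2_inner_residual[OF square_integrable_d]
      by (simp add: S_def L2_inner_d_psi)
    then show ?thesis using L2_inner_d_le[of x] by linarith
  qed
  have integrable: "integrable M (\<lambda>x. (lam i * psi i x)\<^sup>2)" for i
    using square_integrable_cmult[OF square_integrable_psi] by (simp add: square_integrable_def)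
  have "(\<integral>x. (lam i * psi i x)\<^sup>2 \<partial>M) = (lam i)\<^sup>2" for i
  proof -
    have "(\<integral>x. (lam i * psi i x)\<^sup>2 \<partial>M) = (lam i)\<^sup>2 * L2_inner M (psi i) (psi i)"
      by (simp add: L2_inner_def power2_eq_square mult_ac)
    then show ?thesis by (simp add: L2_inner_psi)
  qed
  then have "(\<integral>x. S x \<partial>M) = (\<Sum>i<n. (lam i)\<^sup>2)"
    unfolding S_def by (simp add: Bochner_Integration.integral_sum[OF integrable])
  moreover have "(\<integral>x. S x \<partial>M) \<le> (\<integral>x. d_L2_bound \<partial>M)"
    using S_le integrable by (intro integral_mono) (auto simp: S_def)
  ultimately show ?thesis by (simp add: mult.commute)
qed

lemma lam_square_tendsto_0: "(\<lambda>n. (lam n)\<^sup>2) \<longlonglongrightarrow> 0"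
  by (rule summable_LIMSEQ_zero, rule summableI_nonneg_bounded[OF _ sum_lam_square_le]) simp

lemma AE_zero_if_orth_first_eigenfunction:
  assumes e: "orth_first n e" and eigen: "AE y in M. D e y = l * e y" and large: "(lam n)\<^sup>2 < l\<^sup>2"
  shows "AE y in M. e y = 0"
proof (rule ccontr)
  assume nonzero: "\<not> (AE y in M. e y = 0)"
  have "l \<noteq> 0" using large by auto
  have "is_eigenfun M d l e"
    using e eigen by (simp add: is_eigenfun_def orth_first_def)
  with nonzero obtain i where "lam i = l"
    using nonzero_eigenvalue_in_range[OF \<open>l \<noteq> 0\<close>] by (auto simp: is_eigenvalue_def)
  have "i < n"
  proof (rule ccontr)
    assume "\<not> i < n"
    then have "(lam i)\<^sup>2 \<le> (lam n)\<^sup>2"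
      using abs_lam_antimono[of n i] by (simp add: abs_le_square_iff)
    with large \<open>lam i = l\<close> show False by simp
  qed
  have "lam i \<noteq> 0" using \<open>lam i = l\<close> \<open>l \<noteq> 0\<close> by simp
  note phi = square_integrable_phi[OF this] L2_inner_phi[OF this this]
  have "\<not> (AE y in M. phi i y = 0)"
  proof
    assume "AE y in M. phi i y = 0"
    then have "L2_inner M (phi i) (phi i) = L2_inner M (\<lambda>y. 0) (phi i)"
      by (rule L2_inner_cong_AE[OF phi(1) square_integrable_zero phi(1)])
    with phi(2) show False by simp
  qed
  moreover have "is_eigenfun M d (lam i) (phi i)"
    using phi(1) kernel_op_phi[OF \<open>lam i \<noteq> 0\<close>] by (simp add: is_eigenfun_def)
  ultimately obtain c where c: "AE y in M. e y = c * phi i y"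
    using simple_spectrum \<open>lam i \<noteq> 0\<close> \<open>is_eigenfun M d l e\<close> \<open>lam i = l\<close>
    unfolding simple_nonzero_spectrum_def by blast
  have "L2_inner M e (psi i) = 0"
    using e \<open>i < n\<close> by (simp add: orth_first_def)
  then have "0 = L2_inner M e (phi i)"
    using \<open>lam i \<noteq> 0\<close> by (simp add: psi_def)
  also have "\<dots> = L2_inner M (\<lambda>y. c * phi i y) (phi i)"
    using e by (intro L2_inner_cong_AE[OF _ square_integrable_cmult[OF phi(1)] phi(1) c])
      (simp add: orth_first_def)
  also have "\<dots> = c" by (simp add: L2_inner_cmult_left phi(2))
  finally have "AE y in M. e y = 0" using c by simp
  with nonzero show False by simp
qed

definition orth_opnorm_sq :: "nat \<Rightarrow> real" where
  "orth_opnorm_sq n = Sup {L2_inner M (D w) (D w) | w. orth_first n w \<and> L2_inner M w w \<le> 1}"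

lemma bdd_above_orth_norms:
  "bdd_above {L2_inner M (D w) (D w) | w. orth_first n w \<and> L2_inner M w w \<le> 1}"
proof (rule bdd_aboveI, safe)
  fix w assume "orth_first n w" "L2_inner M w w \<le> 1"
  then have "L2_inner M (D w) (D w) \<le> d_L2_bound * L2_inner M w w * measure M UNIV"
    by (intro L2_inner_kernel_op_le) (simp add: orth_first_def)
  also have "\<dots> \<le> d_L2_bound * 1 * measure M UNIV"
    using \<open>L2_inner M w w \<le> 1\<close> d_L2_bound_nonneg by (intro mult_right_mono mult_left_mono) auto
  finally show "L2_inner M (D w) (D w) \<le> d_L2_bound * measure M UNIV" by simp
qed

lemma L2_inner_kernel_op_le_orth_opnorm_sq_unit:
  "orth_first n w \<Longrightarrow> L2_inner M w w \<le> 1 \<Longrightarrow> L2_inner M (D w) (D w) \<le> orth_opnorm_sq n"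
  unfolding orth_opnorm_sq_def by (rule cSup_upper[OF _ bdd_above_orth_norms]) blast

lemma L2_inner_kernel_op_le_orth_opnorm_sq:
  assumes w: "orth_first n w"
  shows "L2_inner M (D w) (D w) \<le> orth_opnorm_sq n * L2_inner M w w"
proof (cases "L2_inner M w w = 0")
  case True
  have "square_integrable M w" using w by (simp add: orth_first_def)
  then have "AE y in M. w y = 0" using True by (rule L2_inner_self_eq_0_imp_AE)
  then have "D w y = 0" for y
    using kernel_op_cong_AE[OF \<open>square_integrable M w\<close> square_integrable_zero] by simp
  with True show ?thesis by (simp add: L2_inner_def)
next
  case False
  define s where "s = L2_inner M w w"
  have "s > 0" using False L2_inner_self_nonneg[of M w] by (simp add: s_def)
  define c where "c = 1 / sqrt s"
  have "L2_inner M (\<lambda>y. c * w y) (\<lambda>y. c * w y) = 1"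
    using \<open>s > 0\<close> unfolding L2_inner_self_cmult by (simp add: c_def power_divide s_def)
  then have "L2_inner M (D (\<lambda>y. c * w y)) (D (\<lambda>y. c * w y)) \<le> orth_opnorm_sq n"
    by (intro L2_inner_kernel_op_le_orth_opnorm_sq_unit orth_first_cmult w) simp
  moreover have "D (\<lambda>y. c * w y) = (\<lambda>y. c * D w y)"
    using kernel_op_cmult by blast
  ultimately have "c\<^sup>2 * L2_inner M (D w) (D w) \<le> orth_opnorm_sq n"
    by (simp add: L2_inner_self_cmult)
  then show ?thesis
    using \<open>s > 0\<close> by (simp add: c_def power_divide s_def field_simps)
qed

lemma orth_opnorm_sq_maximizing_limit:
  obtains u g where "\<And>k. orth_first n (u k)" "\<And>k. L2_inner M (u k) (u k) \<le> 1"
    "(\<lambda>k. L2_inner M (D (u k)) (D (u k))) \<longlonglongrightarrow> orth_opnorm_sq n"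
    "\<And>y. (\<lambda>k. D (u k) y) \<longlonglongrightarrow> g y"
proof -
  let ?N = "orth_opnorm_sq n"
  have "\<forall>k. \<exists>w. orth_first n w \<and> L2_inner M w w \<le> 1 \<and> ?N - 1 / Suc k < L2_inner M (D w) (D w)"
  proof
    fix k
    have "?N - 1 / Suc k < Sup {L2_inner M (D w) (D w) | w. orth_first n w \<and> L2_inner M w w \<le> 1}"
      by (simp add: orth_opnorm_sq_def)
    moreover have "{L2_inner M (D w) (D w) | w. orth_first n w \<and> L2_inner M w w \<le> 1} \<noteq> {}"
      using orth_first_zero by (fastforce simp: L2_inner_def)
    ultimately show "\<exists>w. orth_first n w \<and> L2_inner M w w \<le> 1 \<and> ?N - 1 / Suc k < L2_inner M (D w) (D w)"
      using less_cSup_iff[OF _ bdd_above_orth_norms] by blast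
  qed
  from choice[OF this] obtain w where w: "\<And>k. orth_first n (w k)" "\<And>k. L2_inner M (w k) (w k) \<le> 1"
    and almost_max: "\<And>k. ?N - 1 / Suc k < L2_inner M (D (w k)) (D (w k))"
    by blast
  then obtain r g where "strict_mono r" and tendsto: "\<forall>y. (\<lambda>k. D (w (r k)) y) \<longlonglongrightarrow> g y"
    using kernel_op_convergent_subsequence[of w] by (auto simp: orth_first_def)
  have "(\<lambda>k. L2_inner M (D (w (r k))) (D (w (r k)))) \<longlonglongrightarrow> ?N"
  proof (rule tendsto_sandwich[where f="\<lambda>k. ?N - 1 / Suc k" and h="\<lambda>k. ?N"])
    have "?N - 1 / Suc k \<le> L2_inner M (D (w (r k))) (D (w (r k)))" for k
    proof -
      have "1 / real (Suc (r k)) \<le> 1 / real (Suc k)"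
        using seq_suble[OF \<open>strict_mono r\<close>, of k] by (intro divide_left_mono) auto
      with almost_max[of "r k"] show ?thesis by linarith
    qed
    then show "\<forall>\<^sub>F k in sequentially. ?N - 1 / Suc k \<le> L2_inner M (D (w (r k))) (D (w (r k)))"
      by simp
    show "\<forall>\<^sub>F k in sequentially. L2_inner M (D (w (r k))) (D (w (r k))) \<le> ?N"
      by (intro always_eventually allI L2_inner_kernel_op_le_orth_opnorm_sq_unit w)
    have "(\<lambda>k. ?N - inverse (real (Suc k))) \<longlonglongrightarrow> ?N - 0"
      by (intro tendsto_intros LIMSEQ_inverse_real_of_nat)
    then show "(\<lambda>k. ?N - 1 / Suc k) \<longlonglongrightarrow> ?N" by (simp add: inverse_eq_divide)
  qed simp
  with w tendsto show ?thesis by (intro that[of "\<lambda>k. w (r k)" g]) auto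
qed

lemma L2_inner_kernel_op_square_defect_le:
  assumes u: "orth_first n u" and unit: "L2_inner M u u \<le> 1"
  defines "N \<equiv> orth_opnorm_sq n"
  shows "L2_inner M (\<lambda>y. D (D u) y + (- N) * u y) (\<lambda>y. D (D u) y + (- N) * u y)
    \<le> N * (N - L2_inner M (D u) (D u))"
proof -
  have sq_u: "square_integrable M u" using u by (simp add: orth_first_def)
  have sq_DDu: "square_integrable M (D (D u))"
    by (intro square_integrable_kernel_op sq_u)
  have "L2_inner M (D (D u)) (D (D u)) \<le> N * L2_inner M (D u) (D u)"
    unfolding N_def by (intro L2_inner_kernel_op_le_orth_opnorm_sq orth_first_kernel_op u)
  moreover have "L2_inner M (D (D u)) u = L2_inner M (D u) (D u)"
    by (intro kernel_op_self_adjoint square_integrable_kernel_op sq_u)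
  moreover have "N\<^sup>2 * L2_inner M u u \<le> N\<^sup>2"
    using unit by (simp add: mult_left_le)
  ultimately have "L2_inner M (D (D u)) (D (D u)) + 2 * (- N) * L2_inner M (D (D u)) u
      + (- N)\<^sup>2 * L2_inner M u u \<le> N * (N - L2_inner M (D u) (D u))"
    by (simp add: power2_eq_square algebra_simps)
  then show ?thesis
    unfolding L2_inner_self_add_cmult[OF sq_DDu sq_u] .
qed

context
  fixes n :: nat and u :: "nat \<Rightarrow> 'a \<Rightarrow> real" and g :: "'a \<Rightarrow> real"
  assumes orth_u: "\<And>k. orth_first n (u k)" and unit_u: "\<And>k. L2_inner M (u k) (u k) \<le> 1"
    and norms_tendsto: "(\<lambda>k. L2_inner M (D (u k)) (D (u k))) \<longlonglongrightarrow> orth_opnorm_sq n"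
    and kernel_op_tendsto: "\<And>y. (\<lambda>k. D (u k) y) \<longlonglongrightarrow> g y"
begin

lemma square_integrable_maximizing: "square_integrable M (u k)"
  using orth_u by (simp add: orth_first_def)

lemma abs_kernel_op_maximizing_le: "\<bar>D (u k) y\<bar> \<le> sqrt d_L2_bound"
  using abs_kernel_op_le[OF square_integrable_maximizing, of k y]
    real_sqrt_le_mono[OF mult_left_le[OF unit_u d_L2_bound_nonneg]] by (rule order_trans)

lemma borel_measurable_maximizing_limit: "g \<in> borel_measurable M"
  using borel_measurable_kernel_op[OF square_integrable_maximizing] kernel_op_tendsto
  by (rule borel_measurable_LIMSEQ_real[rotated])

lemma square_integrable_maximizing_limit: "square_integrable M g"
proof (rule M.square_integrable_if_bounded[OF borel_measurable_maximizing_limit])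
  show "\<bar>g y\<bar> \<le> sqrt d_L2_bound" for y
    using tendsto_rabs[OF kernel_op_tendsto[of y]] abs_kernel_op_maximizing_le
    by (intro Lim_bounded[where M=0]) auto
qed

lemma L2_inner_maximizing_limit_self: "L2_inner M g g = orth_opnorm_sq n"
  using M.L2_inner_self_dominated_convergence[OF borel_measurable_kernel_op[OF square_integrable_maximizing]
      borel_measurable_maximizing_limit abs_kernel_op_maximizing_le kernel_op_tendsto]
    norms_tendsto by (rule LIMSEQ_unique)

lemma L2_inner_kernel_op_maximizing_tendsto:
  "square_integrable M h \<Longrightarrow> (\<lambda>k. L2_inner M (D (u k)) h) \<longlonglongrightarrow> L2_inner M g h"
  by (rule M.L2_inner_dominated_convergence[OF borel_measurable_kernel_op[OF square_integrable_maximizing]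
      borel_measurable_maximizing_limit abs_kernel_op_maximizing_le kernel_op_tendsto])

lemma orth_first_maximizing_limit: "orth_first n g"
proof -
  have "L2_inner M g (psi i) = 0" if "i < n" for i
  proof -
    have "L2_inner M (D (u k)) (psi i) = 0" for k
      using orth_first_kernel_op[OF orth_u] that by (simp add: orth_first_def)
    with L2_inner_kernel_op_maximizing_tendsto[OF square_integrable_psi, of i] show ?thesis
      by (simp add: LIMSEQ_const_iff)
  qed
  with square_integrable_maximizing_limit show ?thesis by (simp add: orth_first_def)
qed

lemma kernel_op2_maximizing_tendsto: "(\<lambda>k. D (D (u k)) y) \<longlonglongrightarrow> D g y"
  using L2_inner_kernel_op_maximizing_tendsto[OF square_integrable_d] by (simp add: kernel_op_eq_L2_inner)

lemma kernel_op3_maximizing_tendsto: "(\<lambda>k. D (D (D (u k))) y) \<longlonglongrightarrow> D (D g) y"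
proof -
  have "\<bar>D (D (u k)) z\<bar> \<le> sqrt (d_L2_bound * orth_opnorm_sq n)" for k z
  proof -
    have "L2_inner M (D (u k)) (D (u k)) \<le> orth_opnorm_sq n"
      by (intro L2_inner_kernel_op_le_orth_opnorm_sq_unit orth_u unit_u)
    with abs_kernel_op_le[OF square_integrable_kernel_op[OF square_integrable_maximizing], of k z]
    show ?thesis
      using d_L2_bound_nonneg by (meson mult_left_mono order_trans real_sqrt_le_mono)
  qed
  then show ?thesis
    unfolding kernel_op_eq_L2_inner[of "D (D _)"] kernel_op_eq_L2_inner[of "D g"]
    by (intro M.L2_inner_dominated_convergence[OF _ _ _ kernel_op2_maximizing_tendsto square_integrable_d]
        borel_measurable_kernel_op square_integrable_kernel_op square_integrable_maximizing
        square_integrable_maximizing_limit)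
qed

text \<open>The defect of u k as an eigenfunction of D squared tends to zero in L2, hence
  pointwise after applying D.\<close>

lemma kernel_op2_maximizing_limit: "D (D g) y = orth_opnorm_sq n * g y"
proof -
  define N where "N = orth_opnorm_sq n"
  define e where "e k y = D (D (u k)) y + (- N) * u k y" for k y
  have sq_e: "square_integrable M (e k)" for k
    unfolding e_def[abs_def]
    by (intro square_integrable_add square_integrable_cmult square_integrable_kernel_op
        square_integrable_maximizing)
  have "(\<lambda>k. L2_inner M (e k) (e k)) \<longlonglongrightarrow> 0"
  proof (rule tendsto_sandwich[where f="\<lambda>k. 0" and h="\<lambda>k. N * (N - L2_inner M (D (u k)) (D (u k)))"])
    show "\<forall>\<^sub>F k in sequentially. 0 \<le> L2_inner M (e k) (e k)"
      by (simp add: L2_inner_self_nonneg)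
    show "\<forall>\<^sub>F k in sequentially. L2_inner M (e k) (e k) \<le> N * (N - L2_inner M (D (u k)) (D (u k)))"
      unfolding e_def[abs_def] N_def
      by (intro always_eventually allI L2_inner_kernel_op_square_defect_le orth_u unit_u)
    show "(\<lambda>k. N * (N - L2_inner M (D (u k)) (D (u k)))) \<longlonglongrightarrow> 0"
      using tendsto_mult_left[OF tendsto_diff[OF tendsto_const norms_tendsto], of N N] by (simp add: N_def)
  qed simp
  then have "(\<lambda>k. sqrt (d_L2_bound * L2_inner M (e k) (e k))) \<longlonglongrightarrow> 0"
    using tendsto_real_sqrt[OF tendsto_mult_left[of _ 0 _ d_L2_bound]] by simp
  then have "(\<lambda>k. D (e k) y) \<longlonglongrightarrow> 0"
    by (rule Lim_null_comparison[rotated]) (simp add: abs_kernel_op_le[OF sq_e])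
  moreover have "(\<lambda>k. D (e k) y) \<longlonglongrightarrow> D (D g) y + (- N) * g y"
  proof -
    have "D (e k) y = D (D (D (u k))) y + (- N) * D (u k) y" for k
      unfolding e_def[abs_def]
        kernel_op_add[OF square_integrable_kernel_op[OF square_integrable_kernel_op[OF square_integrable_maximizing]]
          square_integrable_cmult[OF square_integrable_maximizing]] kernel_op_cmult ..
    moreover have "(\<lambda>k. D (D (D (u k))) y + (- N) * D (u k) y) \<longlonglongrightarrow> D (D g) y + (- N) * g y"
      by (intro tendsto_add tendsto_mult_left kernel_op3_maximizing_tendsto kernel_op_tendsto)
    ultimately show ?thesis by simp
  qed
  ultimately show ?thesis
    using LIMSEQ_unique by (fastforce simp: N_def)
qed

end

lemma orth_first_eigenfunction_if_square:
  assumes g: "orth_first n g" and nonzero: "\<not> (AE y in M. g y = 0)" and "s > 0"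
    and square: "\<And>y. D (D g) y = s\<^sup>2 * g y"
  shows "\<exists>e l. orth_first n e \<and> l\<^sup>2 = s\<^sup>2 \<and> (AE y in M. D e y = l * e y) \<and> \<not> (AE y in M. e y = 0)"
proof -
  have sq_g: "square_integrable M g" using g by (simp add: orth_first_def)
  define h where "h y = D g y + s * g y" for y
  have h: "orth_first n h"
    unfolding h_def[abs_def] by (intro orth_first_add orth_first_kernel_op orth_first_cmult g)
  have "D h y = s * h y" for y
    using square[of y] unfolding h_def[abs_def]
    by (simp add: kernel_op_add kernel_op_cmult square_integrable_kernel_op square_integrable_cmult sq_g)
      (simp add: h_def power2_eq_square algebra_simps)
  show ?thesis
  proof (cases "AE y in M. h y = 0")
    case False
    with h \<open>\<And>y. D h y = s * h y\<close> show ?thesis by blast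
  next
    case True
    then have "AE y in M. D g y = (- s) * g y" by eventually_elim (simp add: h_def)
    with g nonzero show ?thesis by (intro exI[of _ g] exI[of _ "- s"]) simp
  qed
qed

lemma orth_opnorm_sq_le: "orth_opnorm_sq n \<le> (lam n)\<^sup>2"
proof (rule ccontr)
  define N where "N = orth_opnorm_sq n"
  assume "\<not> orth_opnorm_sq n \<le> (lam n)\<^sup>2"
  then have large: "(lam n)\<^sup>2 < N" by (simp add: N_def)
  then have "N > 0" using zero_le_power2[of "lam n"] by linarith
  obtain u g where "\<And>k. orth_first n (u k)" "\<And>k. L2_inner M (u k) (u k) \<le> 1"
    "(\<lambda>k. L2_inner M (D (u k)) (D (u k))) \<longlonglongrightarrow> orth_opnorm_sq n" "\<And>y. (\<lambda>k. D (u k) y) \<longlonglongrightarrow> g y"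
    by (rule orth_opnorm_sq_maximizing_limit[of n]) auto
  note limit = orth_first_maximizing_limit[OF this] L2_inner_maximizing_limit_self[OF this]
    kernel_op2_maximizing_limit[OF this]
  have "\<not> (AE y in M. g y = 0)"
  proof
    assume "AE y in M. g y = 0"
    then have "L2_inner M g g = L2_inner M (\<lambda>y. 0) g"
      using limit(1) by (intro L2_inner_cong_AE) (simp_all add: orth_first_def)
    with limit(2) \<open>N > 0\<close> show False by (simp add: N_def)
  qed
  moreover have "D (D g) y = (sqrt N)\<^sup>2 * g y" for y
    using limit(3) \<open>N > 0\<close> by (simp add: N_def)
  ultimately obtain e l where "orth_first n e" "l\<^sup>2 = (sqrt N)\<^sup>2"
    "AE y in M. D e y = l * e y" "\<not> (AE y in M. e y = 0)"
    using orth_first_eigenfunction_if_square[OF limit(1), of "sqrt N"] \<open>N > 0\<close> by auto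
  moreover from this(2) have "(lam n)\<^sup>2 < l\<^sup>2" using large \<open>N > 0\<close> by simp
  ultimately show False using AE_zero_if_orth_first_eigenfunction by blast
qed

lemma L2_inner_kernel_op_orth_first_le:
  "orth_first n v \<Longrightarrow> L2_inner M (D v) (D v) \<le> (lam n)\<^sup>2 * L2_inner M v v"
  using L2_inner_kernel_op_le_orth_opnorm_sq mult_right_mono[OF orth_opnorm_sq_le L2_inner_self_nonneg]
  by (rule order_trans)

lemma residual_d: "residual (d x) n y = d x y - (\<Sum>i<n. lam i * phi i x * phi i y)"
  by (simp add: residual_def L2_inner_d_psi lam_mult_psi_psi)

text \<open>The residual w of the expansion of d x satisfies norm w squared = (D w) x, and D w is
  Lipschitz uniformly in n; so a large residual would make D w large on a ball around x,
  contradicting the smallness of D w on the orthogonal complement.\<close>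

lemma L2_inner_residual_d_small:
  assumes "\<epsilon> > 0"
  shows "\<exists>\<tau>>0. \<forall>n. (lam n)\<^sup>2 * d_L2_bound < \<tau> \<longrightarrow>
    L2_inner M (residual (d x) n) (residual (d x) n) < \<epsilon>"
proof -
  define L where "L = sqrt (measure M UNIV * d_L2_bound)"
  define \<rho> where "\<rho> = \<epsilon> / (2 * (L + 1))"
  have "0 \<le> L" by (simp add: L_def d_L2_bound_nonneg)
  then have "\<rho> > 0" "L * \<rho> \<le> \<epsilon> / 2"
    using \<open>\<epsilon> > 0\<close> by (simp_all add: \<rho>_def field_simps)
  define \<tau> where "\<tau> = (\<epsilon> / 2)\<^sup>2 * measure M (metric.mball x \<rho>)"
  have "\<tau> > 0" using measure_mball_pos[OF \<open>\<rho> > 0\<close>] \<open>\<epsilon> > 0\<close> by (simp add: \<tau>_def)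
  have "L2_inner M w w < \<epsilon>" if "(lam n)\<^sup>2 * d_L2_bound < \<tau>" and w: "w = residual (d x) n" for n w
  proof (rule ccontr)
    assume "\<not> L2_inner M w w < \<epsilon>"
    have sq_w: "square_integrable M w" by (simp add: w square_integrable_residual square_integrable_d)
    have norm_w: "L2_inner M w w \<le> d_L2_bound"
      using order_trans[OF L2_inner_residual_le[OF square_integrable_d] L2_inner_d_le] by (simp add: w)
    have "L2_inner M w w = D w x"
      by (simp add: w L2_inner_residual_self square_integrable_d kernel_op_eq_L2_inner L2_inner_commute)
    moreover have "\<bar>D w y - D w x\<bar> \<le> L * d x y" for y
    proof -
      have "sqrt (measure M UNIV * L2_inner M w w) \<le> L"
        unfolding L_def using norm_w by (intro real_sqrt_le_mono mult_left_mono) auto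
      have "\<bar>D w y - D w x\<bar> \<le> sqrt (measure M UNIV * L2_inner M w w) * d y x"
        by (rule kernel_op_Lipschitz[OF sq_w])
      also have "\<dots> \<le> L * d y x"
        by (rule mult_right_mono[OF \<open>sqrt (measure M UNIV * L2_inner M w w) \<le> L\<close> metric.nonneg])
      finally show ?thesis by (simp add: metric.commute[of y x])
    qed
    ultimately have "\<tau> \<le> L2_inner M (D w) (D w)"
      unfolding \<tau>_def using \<open>\<not> L2_inner M w w < \<epsilon>\<close> \<open>0 \<le> L\<close> \<open>L * \<rho> \<le> \<epsilon> / 2\<close>
      by (intro L2_inner_self_ge_on_mball square_integrable_kernel_op sq_w) auto
    also have "\<dots> \<le> (lam n)\<^sup>2 * L2_inner M w w"
      by (simp add: w L2_inner_kernel_op_orth_first_le orth_first_residual square_integrable_d)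
    also have "\<dots> \<le> (lam n)\<^sup>2 * d_L2_bound"
      using norm_w by (simp add: mult_left_mono)
    finally show False using that(1) by simp
  qed
  with \<open>\<tau> > 0\<close> show ?thesis by blast
qed

lemma integrable_d_expansion_square:
  "integrable M (\<lambda>y. (d x y - (\<Sum>i<n. lam i * phi i x * phi i y))\<^sup>2)"
  using square_integrable_residual[OF square_integrable_d, of x n]
  by (simp add: square_integrable_def residual_d)

lemma d_expansion_L2_tendsto:
  "(\<lambda>n. \<integral>y. (d x y - (\<Sum>i<n. lam i * phi i x * phi i y))\<^sup>2 \<partial>M) \<longlonglongrightarrow> 0"
proof -
  have "(\<lambda>n. L2_inner M (residual (d x) n) (residual (d x) n)) \<longlonglongrightarrow> 0"
  proof (rule metric_LIMSEQ_I)
    fix \<epsilon> :: real assume "\<epsilon> > 0"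
    then obtain \<tau> where "\<tau> > 0"
      and small: "\<And>n. (lam n)\<^sup>2 * d_L2_bound < \<tau> \<Longrightarrow> L2_inner M (residual (d x) n) (residual (d x) n) < \<epsilon>"
      using L2_inner_residual_d_small by blast
    have "(\<lambda>n. (lam n)\<^sup>2 * d_L2_bound) \<longlonglongrightarrow> 0"
      by (rule tendsto_mult_left_zero[OF lam_square_tendsto_0])
    then obtain n0 where "\<forall>n\<ge>n0. norm ((lam n)\<^sup>2 * d_L2_bound - 0) < \<tau>"
      using LIMSEQ_D \<open>\<tau> > 0\<close> by blast
    then have "(lam n)\<^sup>2 * d_L2_bound < \<tau>" if "n0 \<le> n" for n
      using that by (auto simp: abs_less_iff)
    then have "dist (L2_inner M (residual (d x) n) (residual (d x) n)) 0 < \<epsilon>" if "n0 \<le> n" for n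
      using small that L2_inner_self_nonneg[of M "residual (d x) n"] by (simp add: dist_real_def)
    then show "\<exists>n0. \<forall>n\<ge>n0. dist (L2_inner M (residual (d x) n) (residual (d x) n)) 0 < \<epsilon>"
      by blast
  qed
  then show ?thesis
    by (simp add: L2_inner_def residual_d power2_eq_square)
qed

end

section \<open>Recovering the metric from the embedding\<close>

lemma tendsto_if_square_diff_tendsto_0:
  fixes s :: "nat \<Rightarrow> real"
  assumes "(\<lambda>k. (a - s k)\<^sup>2) \<longlonglongrightarrow> 0"
  shows "s \<longlonglongrightarrow> a"
proof -
  have "(\<lambda>k. \<bar>a - s k\<bar>) \<longlonglongrightarrow> 0"
    using tendsto_real_sqrt[OF assms] by simp
  then have "(\<lambda>k. a - (a - s k)) \<longlonglongrightarrow> a - 0"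
    by (intro tendsto_diff tendsto_const) (simp add: tendsto_rabs_zero_iff)
  then show ?thesis by simp
qed

lemma AE_eq_if_common_L2_approximation:
  fixes f g :: "'a \<Rightarrow> real" and S :: "nat \<Rightarrow> 'a \<Rightarrow> real"
  assumes sets: "sets M = sets M'" and ac: "absolutely_continuous M' M"
    and int_f: "\<And>n. integrable M (\<lambda>y. (f y - S n y)\<^sup>2)"
    and lim_f: "(\<lambda>n. \<integral>y. (f y - S n y)\<^sup>2 \<partial>M) \<longlonglongrightarrow> 0"
    and int_g: "\<And>n. integrable M' (\<lambda>y. (g y - S n y)\<^sup>2)"
    and lim_g: "(\<lambda>n. \<integral>y. (g y - S n y)\<^sup>2 \<partial>M') \<longlonglongrightarrow> 0"
  shows "AE y in M. f y = g y"
proof -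
  have "(\<lambda>n. \<integral>y. norm ((g y - S n y)\<^sup>2) \<partial>M') \<longlonglongrightarrow> 0"
    using lim_g by simp
  from tendsto_L1_AE_subseq[OF int_g this] obtain r1 where "strict_mono r1"
    and ae_g': "AE y in M'. (\<lambda>k. (g y - S (r1 k) y)\<^sup>2) \<longlonglongrightarrow> 0"
    by blast
  from ae_g' have ae_g: "AE y in M. (\<lambda>k. (g y - S (r1 k) y)\<^sup>2) \<longlonglongrightarrow> 0"
    by (rule absolutely_continuous_AE[OF sets ac])
  have int_f1: "integrable M (\<lambda>y. (f y - S (r1 k) y)\<^sup>2)" for k
    by (rule int_f)
  have lim_f1: "(\<lambda>k. \<integral>y. norm ((f y - S (r1 k) y)\<^sup>2) \<partial>M) \<longlonglongrightarrow> 0"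
    using LIMSEQ_subseq_LIMSEQ[OF lim_f \<open>strict_mono r1\<close>] by (simp add: o_def)
  from tendsto_L1_AE_subseq[of M "\<lambda>k y. (f y - S (r1 k) y)\<^sup>2", OF int_f1 lim_f1]
  obtain r2 where "strict_mono r2" and ae_f: "AE y in M. (\<lambda>k. (f y - S (r1 (r2 k)) y)\<^sup>2) \<longlonglongrightarrow> 0"
    by blast
  have pointwise: "f y = g y"
    if "(\<lambda>k. (f y - S (r1 (r2 k)) y)\<^sup>2) \<longlonglongrightarrow> 0" "(\<lambda>k. (g y - S (r1 k) y)\<^sup>2) \<longlonglongrightarrow> 0" for y
  proof -
    have "(\<lambda>k. (g y - S (r1 (r2 k)) y)\<^sup>2) \<longlonglongrightarrow> 0"
      using LIMSEQ_subseq_LIMSEQ[OF that(2) \<open>strict_mono r2\<close>] by (simp add: o_def)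
    then have "(\<lambda>k. S (r1 (r2 k)) y) \<longlonglongrightarrow> g y"
      by (rule tendsto_if_square_diff_tendsto_0)
    moreover have "(\<lambda>k. S (r1 (r2 k)) y) \<longlonglongrightarrow> f y"
      using that(1) by (rule tendsto_if_square_diff_tendsto_0)
    ultimately show ?thesis using LIMSEQ_unique by blast
  qed
  show ?thesis
    using AE_conjI[OF ae_f ae_g] by (rule AE_mp) (intro AE_I2 impI, elim conjE, rule pointwise)
qed

lemma scaled_eigenfun_mult:
  "scaled_eigenfun lam phi i x * scaled_eigenfun lam phi i y = complex_of_real (lam i * phi i x * phi i y)"
proof (cases "lam i = 0")
  case False
  then have "scaled_eigenfun lam phi i x * scaled_eigenfun lam phi i y
      = (csqrt (complex_of_real (lam i)))\<^sup>2 * complex_of_real (phi i x) * complex_of_real (phi i y)"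
    by (simp add: scaled_eigenfun_def power2_eq_square mult_ac)
  then show ?thesis by simp
qed (simp add: scaled_eigenfun_def)

lemma eigen_products_eq_if_dk_embedding_eq:
  assumes "dk_embedding lam phi = dk_embedding lam' phi'"
  shows "lam i * phi i x * phi i y = lam' i * phi' i x * phi' i y"
proof -
  have "scaled_eigenfun lam phi i z = scaled_eigenfun lam' phi' i z" for z
    using fun_cong[OF fun_cong[OF assms, of z], of i] by (simp add: dk_embedding_def)
  then have "complex_of_real (lam i * phi i x * phi i y) = complex_of_real (lam' i * phi' i x * phi' i y)"
    by (simp only: scaled_eigenfun_mult[symmetric])
  then show ?thesis by (simp only: of_real_eq_iff)
qed

theorem lemma6p2:
  fixes \<mu> \<mu>' :: "'a::topological_space measure"
    and d d' :: "'a \<Rightarrow> 'a \<Rightarrow> real"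
    and lam lam' :: "nat \<Rightarrow> real"
    and phi phi' :: "nat \<Rightarrow> 'a \<Rightarrow> real"
  assumes "compact (UNIV :: 'a set)"
    and "sets \<mu> = sets borel" and "sets \<mu>' = sets borel"
    and "finite_measure \<mu>" and "finite_measure \<mu>'"
    and "strictly_positive \<mu>" and "strictly_positive \<mu>'"
    and "absolutely_continuous \<mu>' \<mu>"
    and "metric_inducing_topology d" and "metric_inducing_topology d'"
    and "simple_nonzero_spectrum \<mu> d" and "simple_nonzero_spectrum \<mu>' d'"
    and "spectral_data \<mu> d lam phi" and "spectral_data \<mu>' d' lam' phi'"
    and "dk_embedding lam phi = dk_embedding lam' phi'"
  shows "d = d'"
proof -
  interpret X: mm_spectral_data \<mu> d lam phi
    using assms by (simp add: mm_spectral_data_def mm_spectral_data_axioms_def compact_mm_space_def)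
  interpret Y: mm_spectral_data \<mu>' d' lam' phi'
    using assms by (simp add: mm_spectral_data_def mm_spectral_data_axioms_def compact_mm_space_def)
  have same_expansion: "(\<Sum>i<n. lam' i * phi' i x * phi' i y) = (\<Sum>i<n. lam i * phi i x * phi i y)"
    for n x y using eigen_products_eq_if_dk_embedding_eq[OF assms(15)] by simp
  have "d x = d' x" for x
  proof (rule X.continuous_eq_if_AE_eq[OF X.continuous_on_d Y.continuous_on_d])
    show "AE y in \<mu>. d x y = d' x y"
    proof (rule AE_eq_if_common_L2_approximation[where S="\<lambda>n y. \<Sum>i<n. lam i * phi i x * phi i y"])
      show "sets \<mu> = sets \<mu>'" using assms(2,3) by simp
      show "absolutely_continuous \<mu>' \<mu>" by (rule assms(8))
      show "integrable \<mu>' (\<lambda>y. (d' x y - (\<Sum>i<n. lam i * phi i x * phi i y))\<^sup>2)" for n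
        using Y.integrable_d_expansion_square by (simp only: same_expansion)
      show "(\<lambda>n. \<integral>y. (d' x y - (\<Sum>i<n. lam i * phi i x * phi i y))\<^sup>2 \<partial>\<mu>') \<longlonglongrightarrow> 0"
        using Y.d_expansion_L2_tendsto by (simp only: same_expansion)
    qed (rule X.integrable_d_expansion_square X.d_expansion_L2_tendsto)+
  qed
  then show ?thesis by auto
qed

end
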